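(* Let $S$ be a finite right loop with $|S/\mathcal Z(S)|=k$, and let $\theta:G_S\to G_{S/\mathcal Z(S)}$ be the surjective homomorphism $f^S(y,z)\mapsto f^{S/\mathcal Z(S)}(\mathcal Z(S)\circ y,\mathcal Z(S)\circ z)$ induced by the natural projection. Then $\ker\theta$ is isomorphic to a subgroup of the abelian group $\mathcal Z(S)^{k-1}=\mathcal Z(S)\times\cdots\times\mathcal Z(S)$ ($k-1$ factors).
   Context: A right loop is a set $S$ with binary operation $\circ$ and two-sided identity $1$ such that each equation $X\circ a=b$ has a unique solution. For $y,z\in S$, $f^S(y,z):S\to S$ sends $x$ to the unique $X$ with $X\circ(y\circ z)=(x\circ y)\circ z$; $G_S\le\mathrm{Sym}(S)$ is generated by all $f^S(y,z)$. A congruence is an equivalence relation which is a right subloop of $S\times S$; an invariant right subloop is the class $T$ of $1$ under a congruence, $S/T=\{T\circ x\}$ with $(T\circ x)\circ(T\circ y)=T\circ(x\circ y)$. For congruences $\beta,\gamma$, $\gamma$ centralizes $\beta$ if there is a congruence $(\gamma|\beta)$ on the right loop $\beta\subseteq S\times S$ with: (i) $(x,y)(\gamma|\beta)(u,v)\Rightarrow x\gamma u$; (ii) for $(x,y)\in\beta$, $(u,v)\mapsto u$ is a bijection from the $(\gamma|\beta)$-class of $(x,y)$ to the $\gamma$-class of $x$; (iii) $(x,y)\in\gamma\Rightarrow(x,x)(\gamma|\beta)(y,y)$; (iv) $(x,y)(\gamma|\beta)(u,v)\Rightarrow(y,x)(\gamma|\beta)(v,u)$; (v) $(x,y)(\gamma|\beta)(u,v)$,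 $(y,z)(\gamma|\beta)(v,w)\Rightarrow(x,z)(\gamma|\beta)(u,w)$. The center congruence $\zeta(S)$ is the unique maximal congruence centralized by $S\times S$; the center $\mathcal Z(S)$ is its class of $1$, an abelian group under $\circ$. *)

theory Defs
  imports Main "HOL-Algebra.Bij" "HOL-Algebra.Generated_Groups" "HOL-Algebra.Product_Groups"
          "HOL-Algebra.Coset"
begin

definition right_loop :: "'a set \<Rightarrow> ('a \<Rightarrow> 'a \<Rightarrow> 'a) \<Rightarrow> 'a \<Rightarrow> bool" where
  "right_loop S m e \<longleftrightarrow> e \<in> S \<and> (\<forall>x\<in>S. \<forall>y\<in>S. m x y \<in> S)
     \<and> (\<forall>x\<in>S. m e x = x \<and> m x e = x)
     \<and> (\<forall>a\<in>S. \<forall>b\<in>S. \<exists>!X. X \<in> S \<and> m X a = b)"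

definition right_subloop :: "'a set \<Rightarrow> ('a \<Rightarrow> 'a \<Rightarrow> 'a) \<Rightarrow> 'a \<Rightarrow> 'a set \<Rightarrow> bool" where
  "right_subloop S m e T \<longleftrightarrow> T \<subseteq> S \<and> right_loop T m e"

definition pair_op :: "('a \<Rightarrow> 'a \<Rightarrow> 'a) \<Rightarrow> ('a \<times> 'a) \<Rightarrow> ('a \<times> 'a) \<Rightarrow> ('a \<times> 'a)" where
  "pair_op m p q = (m (fst p) (fst q), m (snd p) (snd q))"

definition rl_congruence :: "'a set \<Rightarrow> ('a \<Rightarrow> 'a \<Rightarrow> 'a) \<Rightarrow> 'a \<Rightarrow> ('a \<times> 'a) set \<Rightarrow> bool" where
  "rl_congruence S m e \<beta> \<longleftrightarrow> equiv S \<beta> \<and> right_subloop (S \<times> S) (pair_op m) (e, e) \<beta>"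

definition centralizes ::
  "'a set \<Rightarrow> ('a \<Rightarrow> 'a \<Rightarrow> 'a) \<Rightarrow> 'a \<Rightarrow> ('a \<times> 'a) set \<Rightarrow> ('a \<times> 'a) set \<Rightarrow> bool" where
  "centralizes S m e \<gamma> \<beta> \<longleftrightarrow> (\<exists>C.
     rl_congruence \<beta> (pair_op m) (e, e) C
     \<and> (\<forall>x y u v. ((x, y), (u, v)) \<in> C \<longrightarrow> (x, u) \<in> \<gamma>)
     \<and> (\<forall>x y. (x, y) \<in> \<beta> \<longrightarrow> bij_betw fst (C `` {(x, y)}) (\<gamma> `` {x}))
     \<and> (\<forall>x y. (x, y) \<in> \<gamma> \<longrightarrow> ((x, x), (y, y)) \<in> C)
     \<and> (\<forall>x y u v. ((x, y), (u, v)) \<in> C \<longrightarrow> ((y, x), (v, u)) \<in> C)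
     \<and> (\<forall>x y z u v w. ((x, y), (u, v)) \<in> C \<longrightarrow> ((y, z), (v, w)) \<in> C
          \<longrightarrow> ((x, z), (u, w)) \<in> C))"

text \<open>zeta is the center congruence: the unique maximal (= greatest) congruence
  centralized by S \<times> S.\<close>
definition is_center_congruence ::
  "'a set \<Rightarrow> ('a \<Rightarrow> 'a \<Rightarrow> 'a) \<Rightarrow> 'a \<Rightarrow> ('a \<times> 'a) set \<Rightarrow> bool" where
  "is_center_congruence S m e \<zeta> \<longleftrightarrow> rl_congruence S m e \<zeta> \<and> centralizes S m e (S \<times> S) \<zeta>
     \<and> (\<forall>\<beta>. rl_congruence S m e \<beta> \<and> centralizes S m e (S \<times> S) \<beta> \<longrightarrow> \<beta> \<subseteq> \<zeta>)"

definition fS :: "'a set \<Rightarrow> ('a \<Rightarrow> 'a \<Rightarrow> 'a) \<Rightarrow> 'a \<Rightarrow> 'a \<Rightarrow> ('a \<Rightarrow> 'a)" where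
  "fS S m y z = (\<lambda>x\<in>S. THE X. X \<in> S \<and> m X (m y z) = m (m x y) z)"

definition GS :: "'a set \<Rightarrow> ('a \<Rightarrow> 'a \<Rightarrow> 'a) \<Rightarrow> ('a \<Rightarrow> 'a) monoid" where
  "GS S m = (BijGroup S)\<lparr>carrier := generate (BijGroup S) {fS S m y z | y z. y \<in> S \<and> z \<in> S}\<rparr>"

definition rcos :: "('a \<Rightarrow> 'a \<Rightarrow> 'a) \<Rightarrow> 'a set \<Rightarrow> 'a \<Rightarrow> 'a set" where
  "rcos m T x = (\<lambda>t. m t x) ` T"

definition quot_carrier :: "'a set \<Rightarrow> ('a \<Rightarrow> 'a \<Rightarrow> 'a) \<Rightarrow> 'a set \<Rightarrow> 'a set set" where
  "quot_carrier S m T = rcos m T ` S"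

definition quot_op :: "'a set \<Rightarrow> ('a \<Rightarrow> 'a \<Rightarrow> 'a) \<Rightarrow> 'a set \<Rightarrow> 'a set \<Rightarrow> 'a set \<Rightarrow> 'a set" where
  "quot_op S m T A B = rcos m T (m (SOME x. x \<in> S \<and> A = rcos m T x) (SOME y. y \<in> S \<and> B = rcos m T y))"

text \<open>The center Z(S) (class of the identity) as a group under the loop operation.\<close>
definition center_group :: "'a \<Rightarrow> ('a \<Rightarrow> 'a \<Rightarrow> 'a) \<Rightarrow> 'a set \<Rightarrow> 'a monoid" where
  "center_group e m Z = \<lparr>carrier = Z, mult = m, one = e\<rparr>"

end

theory Submission
  imports Defs
begin

text \<open>Central elements associate and commute with everything, so every generator \<open>f(y, z)\<close>,
  hence every element of \<open>G\<^sub>S\<close>, fixes \<open>1\<close> and commutes with left multiplication by central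
  elements. An element \<open>g\<close> of \<open>ker \<theta>\<close> maps each \<open>x\<close> into its own coset \<open>Z(S) \<circ> x\<close>, so
  \<open>g x = c\<^sub>g(x) \<circ> x\<close> with \<open>c\<^sub>g(x) \<in> Z(S)\<close>. The commutation property makes \<open>c\<^sub>g\<close> constant on
  cosets, trivial on \<open>Z(S)\<close> itself, and multiplicative in \<open>g\<close>; reading it off at one
  representative of each of the \<open>k - 1\<close> nontrivial cosets is an injective homomorphism
  \<open>ker \<theta> \<rightarrow> Z(S)\<^sup>k\<^sup>-\<^sup>1\<close>.\<close>

lemma inj_hom_embeds:
  assumes "group G" "group H" "f \<in> hom G H" "inj_on f (carrier G)"
  shows "\<exists>K. subgroup K H \<and> G \<cong> H\<lparr>carrier := K\<rparr>"
proof (intro exI conjI)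
  have sub: "subgroup (f ` carrier G) H"
    using assms by (intro group_hom.img_is_subgroup group_hom.intro group_hom_axioms.intro)
  then show "subgroup (f ` carrier G) H" .
  have "subgroup_generated H (f ` carrier G) = H\<lparr>carrier := f ` carrier G\<rparr>"
    using subgroup.carrier_subgroup_generated_subgroup[OF sub]
    by (simp add: subgroup_generated_def)
  moreover have "f \<in> iso G (subgroup_generated H (f ` carrier G))"
    using iso_onto_image[OF assms(1,2)] assms(3,4) by blast
  ultimately show "G \<cong> H\<lparr>carrier := f ` carrier G\<rparr>"
    by (simp add: is_isoI)
qed

lemma BijGroup_mult_apply:
  "f \<in> Bij S \<Longrightarrow> g \<in> Bij S \<Longrightarrow> x \<in> S \<Longrightarrow> (f \<otimes>\<^bsub>BijGroup S\<^esub> g) x = f (g x)"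
  by (simp add: BijGroup_def compose_eq)

lemma Bij_apply: "f \<in> Bij S \<Longrightarrow> x \<in> S \<Longrightarrow> f x \<in> S"
  by (auto simp: Bij_def bij_betw_def)

lemma BijGroup_inv_apply: "f \<in> Bij S \<Longrightarrow> y \<in> S \<Longrightarrow> (inv\<^bsub>BijGroup S\<^esub> f) (f y) = y"
  using Bij_apply[of f S y] by (simp add: inv_BijGroup Bij_def bij_betw_def inv_into_f_f)

lemma BijGroup_apply_inv: "f \<in> Bij S \<Longrightarrow> x \<in> S \<Longrightarrow> f ((inv\<^bsub>BijGroup S\<^esub> f) x) = x"
  by (simp add: inv_BijGroup Bij_def bij_betw_def f_inv_into_f)

lemma BijGroup_inv_Bij: "f \<in> Bij S \<Longrightarrow> inv\<^bsub>BijGroup S\<^esub> f \<in> Bij S"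
  by (simp add: inv_BijGroup restrict_inv_into_Bij)

lemma carrier_GS: "carrier (GS S m) = generate (BijGroup S) {fS S m y z | y z. y \<in> S \<and> z \<in> S}"
  and mult_GS: "mult (GS S m) = mult (BijGroup S)"
  and one_GS: "one (GS S m) = one (BijGroup S)"
  by (simp_all add: GS_def)

definition rdiv :: "'a set \<Rightarrow> ('a \<Rightarrow> 'a \<Rightarrow> 'a) \<Rightarrow> 'a \<Rightarrow> 'a \<Rightarrow> 'a" where
  "rdiv S m b a = (THE X. X \<in> S \<and> m X a = b)"

context
  fixes S :: "'a set" and m :: "'a \<Rightarrow> 'a \<Rightarrow> 'a" and e :: 'a
  assumes rl: "right_loop S m e"
begin

lemma right_loop_one: "e \<in> S"
  using rl by (simp add: right_loop_def)

lemma right_loop_closed: "x \<in> S \<Longrightarrow> y \<in> S \<Longrightarrow> m x y \<in> S"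
  using rl by (simp add: right_loop_def)

lemma right_loop_left_id: "x \<in> S \<Longrightarrow> m e x = x"
  using rl by (simp add: right_loop_def)

lemma right_loop_right_id: "x \<in> S \<Longrightarrow> m x e = x"
  using rl by (simp add: right_loop_def)

lemma right_loop_ex1: "a \<in> S \<Longrightarrow> b \<in> S \<Longrightarrow> \<exists>!X. X \<in> S \<and> m X a = b"
  using rl by (simp add: right_loop_def)

lemma right_loop_right_cancel:
  assumes "X \<in> S" "Y \<in> S" "a \<in> S" "m X a = m Y a"
  shows "X = Y"
proof -
  have "\<exists>!Z. Z \<in> S \<and> m Z a = m X a"
    using assms by (simp add: right_loop_ex1 right_loop_closed)
  then show ?thesis
    using assms by (metis (no_types, lifting))
qed

lemma rdiv: "a \<in> S \<Longrightarrow> b \<in> S \<Longrightarrow> rdiv S m b a \<in> S \<and> m (rdiv S m b a) a = b"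
  unfolding rdiv_def by (rule theI'[OF right_loop_ex1])

lemma rdiv_mult: "a \<in> S \<Longrightarrow> X \<in> S \<Longrightarrow> rdiv S m (m X a) a = X"
  using rdiv[of a "m X a"] right_loop_closed right_loop_right_cancel[of _ X a] by simp

lemma fS_char:
  assumes "x \<in> S" "y \<in> S" "z \<in> S"
  shows "fS S m y z x \<in> S \<and> m (fS S m y z x) (m y z) = m (m x y) z"
proof -
  have "\<exists>!X. X \<in> S \<and> m X (m y z) = m (m x y) z"
    using assms by (simp add: right_loop_ex1 right_loop_closed)
  from theI'[OF this] show ?thesis
    unfolding fS_def using \<open>x \<in> S\<close> by simp
qed

lemma fS_eqI:
  assumes "x \<in> S" "y \<in> S" "z \<in> S" "X \<in> S" "m X (m y z) = m (m x y) z"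
  shows "fS S m y z x = X"
  using fS_char[OF assms(1-3)] assms right_loop_closed[OF assms(2,3)]
  by (simp add: right_loop_right_cancel)

lemma fS_Bij:
  assumes "y \<in> S" "z \<in> S"
  shows "fS S m y z \<in> Bij S"
proof -
  note closed = right_loop_closed and char = fS_char[OF _ assms]
  have "inj_on (fS S m y z) S"
  proof (rule inj_onI)
    fix x x' assume x: "x \<in> S" "x' \<in> S" and eq: "fS S m y z x = fS S m y z x'"
    then have "m (m x y) z = m (m x' y) z"
      using char[OF x(1)] char[OF x(2)] by simp
    then show "x = x'"
      using x assms closed right_loop_right_cancel by meson
  qed
  moreover have "S \<subseteq> fS S m y z ` S"
  proof
    fix X assume X: "X \<in> S"
    define w where "w = rdiv S m (m X (m y z)) z"
    define x where "x = rdiv S m w y"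
    have w: "w \<in> S" "m w z = m X (m y z)"
      unfolding w_def using rdiv[OF assms(2) closed[OF X closed[OF assms]]] by simp_all
    have x: "x \<in> S" "m x y = w"
      unfolding x_def using rdiv[OF assms(1) w(1)] by simp_all
    have "fS S m y z x = X"
      using fS_eqI[OF x(1) assms X] x w by simp
    with x(1) show "X \<in> fS S m y z ` S" by blast
  qed
  moreover have "fS S m y z ` S \<subseteq> S"
    using char by blast
  ultimately show ?thesis
    unfolding Bij_def fS_def by (simp add: bij_betw_def)
qed

lemma subgroup_GS: "subgroup (carrier (GS S m)) (BijGroup S)"
  unfolding carrier_GS using fS_Bij
  by (intro group.generate_is_subgroup group_BijGroup) (auto simp: BijGroup_def)

lemma group_GS: "group (GS S m)"
  using group.subgroup_imp_group[OF group_BijGroup subgroup_GS] by (simp add: GS_def)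

lemma GS_Bij: "g \<in> carrier (GS S m) \<Longrightarrow> g \<in> Bij S"
  using subgroup.subset[OF subgroup_GS] by (auto simp: BijGroup_def)

lemma inv_GS: "g \<in> carrier (GS S m) \<Longrightarrow> inv\<^bsub>GS S m\<^esub> g = inv\<^bsub>BijGroup S\<^esub> g"
  using group.m_inv_consistent[OF group_BijGroup subgroup_GS] by (simp add: GS_def)

end

locale right_loop_congruence =
  fixes S :: "'a set" and m :: "'a \<Rightarrow> 'a \<Rightarrow> 'a" and e :: 'a and \<zeta> :: "('a \<times> 'a) set"
  assumes right_loop: "right_loop S m e" and congruence: "rl_congruence S m e \<zeta>"
begin

abbreviation Z :: "'a set" where "Z \<equiv> \<zeta> `` {e}"

lemmas closed = right_loop_closed[OF right_loop]
  and one_closed = right_loop_one[OF right_loop]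
  and left_id = right_loop_left_id[OF right_loop]
  and right_id = right_loop_right_id[OF right_loop]
  and right_cancel = right_loop_right_cancel[OF right_loop]

lemma equiv: "equiv S \<zeta>"
  using congruence by (simp add: rl_congruence_def)

lemma right_loop_pairs: "right_loop \<zeta> (pair_op m) (e, e)"
  using congruence by (simp add: rl_congruence_def right_subloop_def)

lemma cong_refl: "x \<in> S \<Longrightarrow> (x, x) \<in> \<zeta>"
  using equiv by (simp add: equiv_def refl_on_def)

lemma cong_sym: "(x, y) \<in> \<zeta> \<Longrightarrow> (y, x) \<in> \<zeta>"
  using equiv by (meson equiv_def symD)

lemma cong_closed: "(x, y) \<in> \<zeta> \<Longrightarrow> x \<in> S \<and> y \<in> S"
  using equiv by (meson equiv_class_eq_iff)

lemma cong_mult: "(a, b) \<in> \<zeta> \<Longrightarrow> (c, d) \<in> \<zeta> \<Longrightarrow> (m a c, m b d) \<in> \<zeta>"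
  using right_loop_closed[OF right_loop_pairs, of "(a, b)" "(c, d)"] by (simp add: pair_op_def)

lemma cong_right_cancel:
  assumes "x \<in> S" "y \<in> S" "a \<in> S" "(m x a, m y a) \<in> \<zeta>"
  shows "(x, y) \<in> \<zeta>"
proof -
  obtain p q where pq: "(p, q) \<in> \<zeta>" "pair_op m (p, q) (a, a) = (m x a, m y a)"
    using rdiv[OF right_loop_pairs cong_refl[OF assms(3)] assms(4)] by (metis prod.exhaust)
  then have "p = x" "q = y"
    using cong_closed[OF pq(1)] assms by (simp_all add: pair_op_def right_cancel)
  with pq show ?thesis by simp
qed

lemma center_closed: "c \<in> Z \<Longrightarrow> c \<in> S"
  using cong_closed by blast

lemma center_mult_cong: "c \<in> Z \<Longrightarrow> x \<in> S \<Longrightarrow> (x, m c x) \<in> \<zeta>"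
  using cong_mult[of e c x x] cong_refl[of x] left_id[of x] by simp

lemma cong_center_factor:
  assumes "(x, y) \<in> \<zeta>"
  shows "rdiv S m y x \<in> Z \<and> m (rdiv S m y x) x = y"
proof -
  have xy: "x \<in> S" "y \<in> S" using cong_closed[OF assms] by simp_all
  note c = rdiv[OF right_loop xy]
  have "(m (rdiv S m y x) x, m e x) \<in> \<zeta>"
    using c left_id[OF xy(1)] cong_sym[OF assms] by simp
  then have "(rdiv S m y x, e) \<in> \<zeta>"
    using cong_right_cancel c one_closed xy(1) by blast
  with c show ?thesis using cong_sym by blast
qed

lemma rcos_center:
  assumes "x \<in> S"
  shows "rcos m Z x = \<zeta> `` {x}"
proof
  show "rcos m Z x \<subseteq> \<zeta> `` {x}"
    unfolding rcos_def using center_mult_cong assms by auto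
  show "\<zeta> `` {x} \<subseteq> rcos m Z x"
  proof
    fix y assume "y \<in> \<zeta> `` {x}"
    then have "rdiv S m y x \<in> Z" "y = m (rdiv S m y x) x"
      using cong_center_factor by simp_all
    then show "y \<in> rcos m Z x"
      unfolding rcos_def by (rule rev_image_eqI)
  qed
qed

lemma class_eq_iff: "x \<in> S \<Longrightarrow> y \<in> S \<Longrightarrow> \<zeta> `` {x} = \<zeta> `` {y} \<longleftrightarrow> (x, y) \<in> \<zeta>"
  using eq_equiv_class_iff[OF equiv] by blast

lemma quot_carrier_classes: "quot_carrier S m Z = (\<lambda>x. \<zeta> `` {x}) ` S"
  unfolding quot_carrier_def using rcos_center by simp

lemma class_in_quot_carrier: "x \<in> S \<Longrightarrow> \<zeta> `` {x} \<in> quot_carrier S m Z"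
  unfolding quot_carrier_classes by blast

lemma quot_op_classes:
  assumes "a \<in> S" "b \<in> S"
  shows "quot_op S m Z (\<zeta> `` {a}) (\<zeta> `` {b}) = \<zeta> `` {m a b}"
proof -
  have rep: "(SOME x. x \<in> S \<and> \<zeta> `` {u} = rcos m Z x) \<in> S \<and>
      (SOME x. x \<in> S \<and> \<zeta> `` {u} = rcos m Z x, u) \<in> \<zeta>" if "u \<in> S" for u
    using someI_ex[of "\<lambda>x. x \<in> S \<and> \<zeta> `` {u} = rcos m Z x"] rcos_center class_eq_iff that
    by (metis (no_types, lifting))
  define a' where "a' = (SOME x. x \<in> S \<and> \<zeta> `` {a} = rcos m Z x)"
  define b' where "b' = (SOME x. x \<in> S \<and> \<zeta> `` {b} = rcos m Z x)"
  have "(m a' b', m a b) \<in> \<zeta>"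
    unfolding a'_def b'_def using rep assms by (simp add: cong_mult)
  then have "\<zeta> `` {m a' b'} = \<zeta> `` {m a b}"
    using rep assms by (simp add: a'_def b'_def class_eq_iff closed)
  then show ?thesis
    unfolding quot_op_def a'_def[symmetric] b'_def[symmetric]
    using rep assms by (simp add: a'_def b'_def rcos_center closed)
qed

lemma right_loop_quot: "right_loop (quot_carrier S m Z) (quot_op S m Z) Z"
proof -
  have "\<exists>!X. X \<in> quot_carrier S m Z \<and> quot_op S m Z X (\<zeta> `` {a}) = \<zeta> `` {b}"
    if "a \<in> S" "b \<in> S" for a b
  proof (rule ex1I)
    show "\<zeta> `` {rdiv S m b a} \<in> quot_carrier S m Z \<and>
        quot_op S m Z (\<zeta> `` {rdiv S m b a}) (\<zeta> `` {a}) = \<zeta> `` {b}"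
      using rdiv[OF right_loop that] that by (simp add: class_in_quot_carrier quot_op_classes)
  next
    fix X assume "X \<in> quot_carrier S m Z \<and> quot_op S m Z X (\<zeta> `` {a}) = \<zeta> `` {b}"
    moreover from this obtain x where x: "x \<in> S" "X = \<zeta> `` {x}"
      unfolding quot_carrier_classes by blast
    ultimately have "\<zeta> `` {m x a} = \<zeta> `` {b}"
      using quot_op_classes that by simp
    then have "(m x a, m (rdiv S m b a) a) \<in> \<zeta>"
      using x(1) rdiv[OF right_loop that] that by (simp add: class_eq_iff closed)
    then show "X = \<zeta> `` {rdiv S m b a}"
      using x rdiv[OF right_loop that] that cong_right_cancel class_eq_iff by blast
  qed
  then show ?thesis
    unfolding right_loop_def quot_carrier_classes
    using one_closed closed left_id right_id by (auto simp: quot_op_classes)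
qed

lemma fS_quot_classes:
  assumes "x \<in> S" "y \<in> S" "z \<in> S"
  shows "fS (quot_carrier S m Z) (quot_op S m Z) (\<zeta> `` {y}) (\<zeta> `` {z}) (\<zeta> `` {x})
         = \<zeta> `` {fS S m y z x}"
  using fS_char[OF right_loop assms] assms
  by (intro fS_eqI[OF right_loop_quot]) (simp_all add: class_in_quot_carrier quot_op_classes closed)

lemma class_representatives:
  assumes "finite S"
  obtains rep where "rep \<in> {..<card (quot_carrier S m Z) - 1} \<rightarrow> S"
    and "\<And>x. x \<in> S - Z \<Longrightarrow> \<exists>i\<in>{..<card (quot_carrier S m Z) - 1}. (rep i, x) \<in> \<zeta>"
proof -
  let ?Q = "quot_carrier S m Z"
  have "finite (?Q - {Z})" "Z \<in> ?Q"
    using assms class_in_quot_carrier[OF one_closed] by (simp_all add: quot_carrier_def)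
  then obtain r where r: "bij_betw r {..<card ?Q - 1} (?Q - {Z})"
    using ex_bij_betw_nat_finite[of "?Q - {Z}"] by (auto simp: atLeast0LessThan)
  define rep where "rep i = (SOME x. x \<in> S \<and> \<zeta> `` {x} = r i)" for i
  have rep: "rep i \<in> S \<and> \<zeta> `` {rep i} = r i" if "i \<in> {..<card ?Q - 1}" for i
  proof -
    have "r i \<in> ?Q" using bij_betwE[OF r] that by blast
    then show ?thesis
      unfolding rep_def quot_carrier_classes by (rule imageE) (metis (mono_tags, lifting) someI)
  qed
  show thesis
  proof
    show "rep \<in> {..<card ?Q - 1} \<rightarrow> S" using rep by blast
    fix x assume x: "x \<in> S - Z"
    then have "\<zeta> `` {x} \<in> ?Q - {Z}"
      using class_in_quot_carrier class_eq_iff[of x e] one_closed cong_sym by auto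
    then obtain i where "i \<in> {..<card ?Q - 1}" "r i = \<zeta> `` {x}"
      using bij_betw_imp_surj_on[OF r] by (metis imageE)
    with rep x show "\<exists>i\<in>{..<card ?Q - 1}. (rep i, x) \<in> \<zeta>"
      using class_eq_iff by blast
  qed
qed

text \<open>The relation \<open>C\<close> plays the role of \<open>(S \<times> S | \<zeta>)\<close>. By condition (ii), the second
  coordinate of a pair \<open>C\<close>-related to \<open>p\<close> is determined by its first one; comparing two
  products computed in \<open>C\<close> shows that central elements associate and commute with everything.\<close>

context
  fixes C :: "(('a \<times> 'a) \<times> ('a \<times> 'a)) set"
  assumes C_mult: "\<And>p q. p \<in> C \<Longrightarrow> q \<in> C \<Longrightarrow> pair_op (pair_op m) p q \<in> C"
    and C_refl: "\<And>p. p \<in> \<zeta> \<Longrightarrow> (p, p) \<in> C"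
    and C_subset: "C \<subseteq> \<zeta> \<times> \<zeta>"
    and C_diag: "\<And>x y. x \<in> S \<Longrightarrow> y \<in> S \<Longrightarrow> ((x, x), (y, y)) \<in> C"
    and C_fst_inj: "\<And>p. p \<in> \<zeta> \<Longrightarrow> inj_on fst (C `` {p})"
begin

lemma C_fst_eq:
  assumes "(p, (x, y)) \<in> C" "(p, (x, y')) \<in> C"
  shows "y = y'"
proof -
  have "p \<in> \<zeta>" using assms(1) C_subset by blast
  with assms show ?thesis
    using inj_onD[OF C_fst_inj, of p "(x, y)" "(x, y')"] by simp
qed

lemma C_left_translation: "c \<in> Z \<Longrightarrow> u \<in> S \<Longrightarrow> ((e, c), (u, m c u)) \<in> C"
  using C_mult[OF C_refl C_diag[OF one_closed], of "(e, c)" u] center_closed[of c]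
  by (simp add: pair_op_def left_id right_id one_closed)

lemma C_center_assoc:
  assumes "c \<in> Z" "u \<in> S" "w \<in> S"
  shows "m (m c u) w = m c (m u w)"
proof -
  have "((e, c), (m u w, m (m c u) w)) \<in> C"
    using C_mult[OF C_left_translation[OF assms(1,2)] C_diag[OF one_closed assms(3)]]
      center_closed[OF assms(1)] by (simp add: pair_op_def left_id right_id one_closed)
  with C_left_translation[OF assms(1) closed[OF assms(2,3)]] show ?thesis
    by (simp add: C_fst_eq)
qed

lemma C_center_comm:
  assumes "c \<in> Z" "d \<in> S"
  shows "m c d = m d c"
proof -
  have "((d, m d c), (d, m c d)) \<in> C"
    using C_mult[OF C_diag[OF assms(2) one_closed] C_left_translation[OF assms]]
      center_closed[OF assms(1)] assms(2) by (simp add: pair_op_def left_id right_id one_closed closed)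
  moreover then have "((d, m d c), (d, m d c)) \<in> C"
    using C_subset C_refl by blast
  ultimately show ?thesis by (simp add: C_fst_eq)
qed

end

end

locale central_congruence = right_loop_congruence +
  assumes centralized: "centralizes S m e (S \<times> S) \<zeta>"
begin

lemma centralizing_relation:
  obtains C where "\<And>p q. p \<in> C \<Longrightarrow> q \<in> C \<Longrightarrow> pair_op (pair_op m) p q \<in> C"
    "\<And>p. p \<in> \<zeta> \<Longrightarrow> (p, p) \<in> C" "C \<subseteq> \<zeta> \<times> \<zeta>"
    "\<And>x y. x \<in> S \<Longrightarrow> y \<in> S \<Longrightarrow> ((x, x), (y, y)) \<in> C"
    "\<And>p. p \<in> \<zeta> \<Longrightarrow> inj_on fst (C `` {p})"
proof -
  obtain C where C: "rl_congruence \<zeta> (pair_op m) (e, e) C"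
    "\<forall>x y. (x, y) \<in> \<zeta> \<longrightarrow> bij_betw fst (C `` {(x, y)}) ((S \<times> S) `` {x})"
    "\<forall>x y. (x, y) \<in> S \<times> S \<longrightarrow> ((x, x), (y, y)) \<in> C"
    using centralized unfolding centralizes_def by blast
  show thesis
  proof
    show "pair_op (pair_op m) p q \<in> C" if "p \<in> C" "q \<in> C" for p q
      using right_loop_closed[of C _ "((e, e), (e, e))" p q] C(1) that
      by (simp add: rl_congruence_def right_subloop_def)
    show "(p, p) \<in> C" if "p \<in> \<zeta>" for p
      using C(1) that by (simp add: rl_congruence_def equiv_def refl_on_def)
    show "C \<subseteq> \<zeta> \<times> \<zeta>"
      using C(1) by (simp add: rl_congruence_def right_subloop_def)
    show "((x, x), (y, y)) \<in> C" if "x \<in> S" "y \<in> S" for x y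
      using C(3) that by blast
    show "inj_on fst (C `` {p})" if "p \<in> \<zeta>" for p
      using C(2) that by (cases p) (simp add: bij_betw_def)
  qed
qed

lemma center_assoc: "c \<in> Z \<Longrightarrow> u \<in> S \<Longrightarrow> w \<in> S \<Longrightarrow> m (m c u) w = m c (m u w)"
  by (rule centralizing_relation) (rule C_center_assoc)

lemma center_comm: "c \<in> Z \<Longrightarrow> d \<in> S \<Longrightarrow> m c d = m d c"
  by (rule centralizing_relation) (rule C_center_comm)

lemma group_center_group: "group (center_group e m Z)"
proof (rule groupI)
  show "x \<otimes>\<^bsub>center_group e m Z\<^esub> y \<in> carrier (center_group e m Z)"
    if "x \<in> carrier (center_group e m Z)" "y \<in> carrier (center_group e m Z)" for x y
    using that cong_mult[of e x e y] left_id[OF one_closed] by (simp add: center_group_def)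
  show "\<exists>y\<in>carrier (center_group e m Z). y \<otimes>\<^bsub>center_group e m Z\<^esub> x = \<one>\<^bsub>center_group e m Z\<^esub>"
    if "x \<in> carrier (center_group e m Z)" for x
  proof -
    have x: "x \<in> Z" "x \<in> S" using that center_closed by (simp_all add: center_group_def)
    note y = rdiv[OF right_loop x(2) one_closed]
    then have "(rdiv S m e x, e) \<in> \<zeta>"
      using cong_right_cancel[OF _ one_closed x(2)] x left_id by simp
    with y show ?thesis using cong_sym by (auto simp: center_group_def)
  qed
qed (auto simp: center_group_def cong_refl one_closed left_id center_closed center_assoc)

definition center_equivariant :: "('a \<Rightarrow> 'a) set" where
  "center_equivariant = {g \<in> Bij S. g e = e \<and> (\<forall>c\<in>Z. \<forall>x\<in>S. g (m c x) = m c (g x))}"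

lemma center_equivariantD:
  assumes "g \<in> center_equivariant"
  shows "g \<in> Bij S" "g e = e" "c \<in> Z \<Longrightarrow> x \<in> S \<Longrightarrow> g (m c x) = m c (g x)"
  using assms by (auto simp: center_equivariant_def)

lemma subgroup_center_equivariant: "subgroup center_equivariant (BijGroup S)"
proof (rule group.subgroupI[OF group_BijGroup])
  have "(\<lambda>x\<in>S. x) \<in> center_equivariant"
    using id_Bij one_closed center_closed closed by (auto simp: center_equivariant_def)
  then show "center_equivariant \<noteq> {}" by blast
next
  fix g assume "g \<in> center_equivariant"
  note g = center_equivariantD[OF this]
  let ?h = "inv\<^bsub>BijGroup S\<^esub> g"
  have h: "?h \<in> Bij S" by (rule BijGroup_inv_Bij[OF g(1)])
  have "?h (m c x) = m c (?h x)" if c: "c \<in> Z" and x: "x \<in> S" for c x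
  proof -
    have hx: "?h x \<in> S" by (rule Bij_apply[OF h x])
    have "m c x = g (m c (?h x))"
      using g(3)[OF c hx] BijGroup_apply_inv[OF g(1) x] by simp
    then show ?thesis
      using BijGroup_inv_apply[OF g(1) closed[OF center_closed[OF c] hx]] by simp
  qed
  moreover have "?h e = e"
    using BijGroup_inv_apply[OF g(1) one_closed] g(2) by simp
  ultimately show "?h \<in> center_equivariant"
    using h by (simp add: center_equivariant_def)
next
  fix g h assume "g \<in> center_equivariant" "h \<in> center_equivariant"
  note g = center_equivariantD[OF this(1)] and h = center_equivariantD[OF this(2)]
  have "(g \<otimes>\<^bsub>BijGroup S\<^esub> h) (m c x) = m c ((g \<otimes>\<^bsub>BijGroup S\<^esub> h) x)"
    if "c \<in> Z" "x \<in> S" for c x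
    using that g h Bij_apply[OF h(1)] by (simp add: BijGroup_mult_apply closed center_closed)
  moreover have "g \<otimes>\<^bsub>BijGroup S\<^esub> h \<in> Bij S"
    using g(1) h(1) by (simp add: BijGroup_def compose_Bij)
  ultimately show "g \<otimes>\<^bsub>BijGroup S\<^esub> h \<in> center_equivariant"
    using g h one_closed by (simp add: BijGroup_mult_apply center_equivariant_def)
qed (auto simp: BijGroup_def center_equivariant_def)

lemma fS_center_equivariant:
  assumes "y \<in> S" "z \<in> S"
  shows "fS S m y z e = e" "c \<in> Z \<Longrightarrow> x \<in> S \<Longrightarrow> fS S m y z (m c x) = m c (fS S m y z x)"
proof -
  show "fS S m y z e = e"
    using assms by (intro fS_eqI[OF right_loop]) (simp_all add: one_closed left_id closed)
  assume c: "c \<in> Z" and x: "x \<in> S"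
  note f = fS_char[OF right_loop x assms]
  have "m (m c (fS S m y z x)) (m y z) = m (m (m c x) y) z"
    using f c x assms by (simp add: center_assoc center_closed closed)
  then show "fS S m y z (m c x) = m c (fS S m y z x)"
    using f c x assms by (intro fS_eqI[OF right_loop]) (simp_all add: center_closed closed)
qed

lemma GS_center_equivariant:
  assumes "g \<in> carrier (GS S m)"
  shows "g e = e" "c \<in> Z \<Longrightarrow> x \<in> S \<Longrightarrow> g (m c x) = m c (g x)"
proof -
  have "carrier (GS S m) \<subseteq> center_equivariant"
    unfolding carrier_GS using fS_Bij[OF right_loop] fS_center_equivariant
    by (intro group.generate_subgroup_incl[OF group_BijGroup] subgroup_center_equivariant)
      (auto simp: center_equivariant_def)
  with assms show "g e = e" "c \<in> Z \<Longrightarrow> x \<in> S \<Longrightarrow> g (m c x) = m c (g x)"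
    using center_equivariantD by blast+
qed

lemma GS_fixes_center: "g \<in> carrier (GS S m) \<Longrightarrow> c \<in> Z \<Longrightarrow> g c = c"
  using GS_center_equivariant[of g] center_closed one_closed right_id by metis

lemma GS_eqI:
  assumes g: "g \<in> carrier (GS S m)" and h: "h \<in> carrier (GS S m)"
    and agree: "\<And>x. x \<in> S - Z \<Longrightarrow> \<exists>r. (r, x) \<in> \<zeta> \<and> g r = h r"
  shows "g = h"
proof (rule extensionalityI[OF Bij_imp_extensional Bij_imp_extensional])
  show "g \<in> Bij S" "h \<in> Bij S"
    using GS_Bij[OF right_loop] g h by blast+
  fix x assume x: "x \<in> S"
  show "g x = h x"
  proof (cases "x \<in> Z")
    case True
    then show ?thesis using GS_fixes_center[OF g] GS_fixes_center[OF h] by simp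
  next
    case False
    with x obtain r where r: "(r, x) \<in> \<zeta>" "g r = h r" using agree by auto
    define c where "c = rdiv S m x r"
    have c: "c \<in> Z" "x = m c r"
      using cong_center_factor[OF r(1)] unfolding c_def by simp_all
    have "r \<in> S" using cong_closed[OF r(1)] by simp
    then show ?thesis
      using GS_center_equivariant(2)[OF g c(1)] GS_center_equivariant(2)[OF h c(1)] c(2) r(2)
      by simp
  qed
qed

end

locale center_projection = central_congruence +
  fixes \<theta> :: "('a \<Rightarrow> 'a) \<Rightarrow> ('a set \<Rightarrow> 'a set)"
  assumes theta_hom:
      "\<theta> \<in> hom (GS S m) (GS (quot_carrier S m (\<zeta> `` {e})) (quot_op S m (\<zeta> `` {e})))"
    and theta_fS: "\<forall>y\<in>S. \<forall>z\<in>S. \<theta> (fS S m y z) =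
      fS (quot_carrier S m (\<zeta> `` {e})) (quot_op S m (\<zeta> `` {e}))
         (rcos m (\<zeta> `` {e}) y) (rcos m (\<zeta> `` {e}) z)"
begin

abbreviation Q :: "'a set set" where "Q \<equiv> quot_carrier S m Z"

abbreviation GQ :: "('a set \<Rightarrow> 'a set) monoid" where "GQ \<equiv> GS Q (quot_op S m Z)"

lemma group_hom_theta: "group_hom (GS S m) GQ \<theta>"
  using group_GS[OF right_loop] group_GS[OF right_loop_quot] theta_hom
  by (intro group_hom.intro group_hom_axioms.intro)

lemma theta_fS_class:
  "x \<in> S \<Longrightarrow> y \<in> S \<Longrightarrow> z \<in> S \<Longrightarrow> \<theta> (fS S m y z) (\<zeta> `` {x}) = \<zeta> `` {fS S m y z x}"
  using theta_fS by (simp add: rcos_center fS_quot_classes)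

definition class_compatible :: "('a \<Rightarrow> 'a) set" where
  "class_compatible = {g \<in> carrier (GS S m). \<forall>x\<in>S. \<theta> g (\<zeta> `` {x}) = \<zeta> `` {g x}}"

lemma subgroup_class_compatible: "subgroup class_compatible (BijGroup S)"
proof (rule group.subgroupI[OF group_BijGroup])
  show "class_compatible \<subseteq> carrier (BijGroup S)"
    using GS_Bij[OF right_loop] by (auto simp: class_compatible_def BijGroup_def)
  have "\<one>\<^bsub>GS S m\<^esub> \<in> class_compatible"
    using group_hom.hom_one[OF group_hom_theta] class_in_quot_carrier
      monoid.one_closed[OF group.is_monoid[OF group_GS[OF right_loop]]]
    by (simp add: class_compatible_def one_GS BijGroup_def)
  then show "class_compatible \<noteq> {}" by blast
next
  fix g assume "g \<in> class_compatible"
  then have g: "g \<in> carrier (GS S m)" and g_class: "\<And>x. x \<in> S \<Longrightarrow> \<theta> g (\<zeta> `` {x}) = \<zeta> `` {g x}"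
    by (auto simp: class_compatible_def)
  let ?h = "inv\<^bsub>BijGroup S\<^esub> g"
  have gB: "g \<in> Bij S" and tgB: "\<theta> g \<in> Bij Q"
    using GS_Bij[OF right_loop g] GS_Bij[OF right_loop_quot hom_in_carrier[OF theta_hom g]] .
  have h: "?h \<in> carrier (GS S m)"
    using group.inv_closed[OF group_GS[OF right_loop] g] inv_GS[OF right_loop g] by simp
  have theta_h: "\<theta> ?h = inv\<^bsub>BijGroup Q\<^esub> (\<theta> g)"
    using group_hom.hom_inv[OF group_hom_theta g] inv_GS[OF right_loop g]
      inv_GS[OF right_loop_quot hom_in_carrier[OF theta_hom g]] by simp
  have "\<theta> ?h (\<zeta> `` {x}) = \<zeta> `` {?h x}" if x: "x \<in> S" for x
  proof -
    have hx: "?h x \<in> S" using Bij_apply[OF BijGroup_inv_Bij[OF gB] x] .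
    have "\<zeta> `` {x} = \<theta> g (\<zeta> `` {?h x})"
      using g_class[OF hx] BijGroup_apply_inv[OF gB x] by simp
    then show ?thesis
      using BijGroup_inv_apply[OF tgB class_in_quot_carrier[OF hx]] theta_h by simp
  qed
  with h show "?h \<in> class_compatible" by (simp add: class_compatible_def)
next
  fix g h assume "g \<in> class_compatible" "h \<in> class_compatible"
  then have g: "g \<in> carrier (GS S m)" "\<And>x. x \<in> S \<Longrightarrow> \<theta> g (\<zeta> `` {x}) = \<zeta> `` {g x}"
    and h: "h \<in> carrier (GS S m)" "\<And>x. x \<in> S \<Longrightarrow> \<theta> h (\<zeta> `` {x}) = \<zeta> `` {h x}"
    by (auto simp: class_compatible_def)
  have "\<theta> (g \<otimes>\<^bsub>BijGroup S\<^esub> h) = \<theta> g \<otimes>\<^bsub>BijGroup Q\<^esub> \<theta> h"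
    using group_hom.hom_mult[OF group_hom_theta g(1) h(1)] by (simp add: mult_GS)
  moreover have "g \<otimes>\<^bsub>BijGroup S\<^esub> h \<in> carrier (GS S m)"
    using monoid.m_closed[OF group.is_monoid[OF group_GS[OF right_loop]] g(1) h(1)] by (simp add: mult_GS)
  moreover note B = GS_Bij[OF right_loop g(1)] GS_Bij[OF right_loop h(1)]
    GS_Bij[OF right_loop_quot hom_in_carrier[OF theta_hom g(1)]]
    GS_Bij[OF right_loop_quot hom_in_carrier[OF theta_hom h(1)]]
  ultimately show "g \<otimes>\<^bsub>BijGroup S\<^esub> h \<in> class_compatible"
    using g h Bij_apply[OF B(2)]
    by (simp add: class_compatible_def BijGroup_mult_apply class_in_quot_carrier)
qed

lemma GS_theta_class: "g \<in> carrier (GS S m) \<Longrightarrow> x \<in> S \<Longrightarrow> \<theta> g (\<zeta> `` {x}) = \<zeta> `` {g x}"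
proof -
  assume "g \<in> carrier (GS S m)" "x \<in> S"
  moreover have "carrier (GS S m) \<subseteq> class_compatible"
    unfolding carrier_GS using theta_fS_class
    by (intro group.generate_subgroup_incl[OF group_BijGroup] subgroup_class_compatible)
      (auto simp: class_compatible_def carrier_GS intro: generate.incl)
  ultimately show ?thesis by (auto simp: class_compatible_def)
qed

abbreviation ker :: "('a \<Rightarrow> 'a) set" where "ker \<equiv> kernel (GS S m) GQ \<theta>"

lemma kernel_cong:
  assumes "g \<in> ker" "x \<in> S"
  shows "(x, g x) \<in> \<zeta>"
proof -
  have g: "g \<in> carrier (GS S m)" "\<theta> g = (\<lambda>A\<in>Q. A)"
    using assms(1) by (simp_all add: kernel_def one_GS BijGroup_def)
  then have "\<zeta> `` {g x} = \<zeta> `` {x}"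
    using GS_theta_class[OF g(1) assms(2)] class_in_quot_carrier[OF assms(2)] by simp
  then show ?thesis
    using class_eq_iff Bij_apply[OF GS_Bij[OF right_loop g(1)] assms(2)] assms(2) cong_sym by blast
qed

lemma kernel_factor:
  "g \<in> ker \<Longrightarrow> x \<in> S \<Longrightarrow> rdiv S m (g x) x \<in> Z \<and> m (rdiv S m (g x) x) x = g x"
  by (rule cong_center_factor[OF kernel_cong])

lemma kernel_factor_mult:
  assumes g: "g \<in> ker" and h: "h \<in> ker" and x: "x \<in> S"
  shows "rdiv S m ((g \<otimes>\<^bsub>GS S m\<^esub> h) x) x = m (rdiv S m (g x) x) (rdiv S m (h x) x)"
proof -
  define a b where "a = rdiv S m (g x) x" and "b = rdiv S m (h x) x"
  have a: "a \<in> Z" "m a x = g x" and b: "b \<in> Z" "m b x = h x"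
    using kernel_factor[OF g x] kernel_factor[OF h x] by (simp_all add: a_def b_def)
  have gh: "g \<in> carrier (GS S m)" "h \<in> carrier (GS S m)"
    using g h by (simp_all add: kernel_def)
  have "(g \<otimes>\<^bsub>GS S m\<^esub> h) x = g (m b x)"
    using b(2) GS_Bij[OF right_loop] gh x by (simp add: mult_GS BijGroup_mult_apply)
  also have "\<dots> = m b (m a x)"
    using GS_center_equivariant(2)[OF gh(1) b(1) x] a(2) by simp
  also have "\<dots> = m (m a b) x"
    using center_assoc[OF b(1) _ x] center_comm[OF b(1)] a(1) center_closed by simp
  finally show ?thesis
    using a(1) b(1) center_closed x by (simp add: a_def b_def rdiv_mult[OF right_loop] closed)
qed

lemma kernel_embeds_into_center_power:
  assumes rep: "rep \<in> I \<rightarrow> S" and covers: "\<And>x. x \<in> S - Z \<Longrightarrow> \<exists>i\<in>I. (rep i, x) \<in> \<zeta>"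
  shows "\<exists>H. subgroup H (product_group I (\<lambda>_. center_group e m Z))
    \<and> (GS S m)\<lparr>carrier := ker\<rparr> \<cong> (product_group I (\<lambda>_. center_group e m Z))\<lparr>carrier := H\<rparr>"
proof (rule inj_hom_embeds)
  define \<Phi> where "\<Phi> g = (\<lambda>i\<in>I. rdiv S m (g (rep i)) (rep i))" for g :: "'a \<Rightarrow> 'a"
  show "group ((GS S m)\<lparr>carrier := ker\<rparr>)"
    using group.subgroup_imp_group[OF group_GS[OF right_loop]
        group_hom.subgroup_kernel[OF group_hom_theta]] .
  show "group (product_group I (\<lambda>_. center_group e m Z))"
    using group_center_group by simp
  have "\<Phi> g \<in> (\<Pi>\<^sub>E i\<in>I. Z)" if "g \<in> ker" for g
    using kernel_factor[OF that] rep by (auto simp: \<Phi>_def)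
  moreover have "\<Phi> (g \<otimes>\<^bsub>GS S m\<^esub> h) = (\<lambda>i\<in>I. m (\<Phi> g i) (\<Phi> h i))" if "g \<in> ker" "h \<in> ker" for g h
    using kernel_factor_mult[OF that] rep by (auto simp: \<Phi>_def Pi_iff intro!: restrict_ext)
  ultimately show "\<Phi> \<in> hom ((GS S m)\<lparr>carrier := ker\<rparr>) (product_group I (\<lambda>_. center_group e m Z))"
    by (simp add: hom_def center_group_def)
  show "inj_on \<Phi> (carrier ((GS S m)\<lparr>carrier := ker\<rparr>))"
  proof (rule inj_onI)
    fix g h assume "g \<in> carrier ((GS S m)\<lparr>carrier := ker\<rparr>)" "h \<in> carrier ((GS S m)\<lparr>carrier := ker\<rparr>)"
      and eq: "\<Phi> g = \<Phi> h"
    then have gh: "g \<in> ker" "h \<in> ker" by simp_all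
    have "g (rep i) = h (rep i)" if i: "i \<in> I" for i
    proof -
      have "rdiv S m (g (rep i)) (rep i) = rdiv S m (h (rep i)) (rep i)"
        using fun_cong[OF eq, of i] i by (simp add: \<Phi>_def)
      then show ?thesis
        using kernel_factor[OF gh(1)] kernel_factor[OF gh(2)] rep i by (metis PiE)
    qed
    moreover have "g \<in> carrier (GS S m)" "h \<in> carrier (GS S m)"
      using gh by (simp_all add: kernel_def)
    ultimately show "g = h"
      using covers by (intro GS_eqI) blast+
  qed
qed

end

theorem mainTheorem13:
  fixes S :: "'a set" and m :: "'a \<Rightarrow> 'a \<Rightarrow> 'a" and e :: 'a
    and \<zeta> :: "('a \<times> 'a) set" and \<theta> :: "('a \<Rightarrow> 'a) \<Rightarrow> ('a set \<Rightarrow> 'a set)"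
  assumes "right_loop S m e" and "finite S"
    and "is_center_congruence S m e \<zeta>"
    and "\<theta> \<in> hom (GS S m) (GS (quot_carrier S m (\<zeta> `` {e})) (quot_op S m (\<zeta> `` {e})))"
    and "\<forall>y\<in>S. \<forall>z\<in>S. \<theta> (fS S m y z) =
           fS (quot_carrier S m (\<zeta> `` {e})) (quot_op S m (\<zeta> `` {e}))
              (rcos m (\<zeta> `` {e}) y) (rcos m (\<zeta> `` {e}) z)"
  shows "\<exists>H. subgroup H (product_group {..< card (quot_carrier S m (\<zeta> `` {e})) - 1}
                                          (\<lambda>_. center_group e m (\<zeta> `` {e})))
          \<and> (GS S m)\<lparr>carrier := kernel (GS S m)
                (GS (quot_carrier S m (\<zeta> `` {e})) (quot_op S m (\<zeta> `` {e}))) \<theta>\<rparr>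
            \<cong> (product_group {..< card (quot_carrier S m (\<zeta> `` {e})) - 1}
                  (\<lambda>_. center_group e m (\<zeta> `` {e})))\<lparr>carrier := H\<rparr>"
proof -
  interpret center_projection S m e \<zeta> \<theta>
    using assms by unfold_locales (simp_all add: is_center_congruence_def)
  obtain rep where "rep \<in> {..<card (quot_carrier S m Z) - 1} \<rightarrow> S"
    and "\<And>x. x \<in> S - Z \<Longrightarrow> \<exists>i\<in>{..<card (quot_carrier S m Z) - 1}. (rep i, x) \<in> \<zeta>"
    using class_representatives[OF \<open>finite S\<close>] by blast
  then show ?thesis
    by (rule kernel_embeds_into_center_power)
qed

end
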